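(* Let $A$ be a C$^*$-algebra with cancellation. (1) If $p_1,q,p_2$ are projections in $A$ with $p_1\leq p_2$ and $p_1\lesssim q\lesssim p_2$, then there exists a projection $q'\in A$ with $q'\sim_{\mathrm{MvN}}q$ and $p_1\leq q'\leq p_2$. (2) Let $\{p_n\}_{n=1}^N$ and $\{q_m\}_{m=1}^M$ be increasing sequences of projections in $A$. If there exist integers $1\leq m_1<\cdots<m_N=M$ with $p_n\sim_{\mathrm{MvN}}q_{m_n}$ for all $1\leq n\leq N$, then there exists an increasing sequence $\{r_m\}_{m=1}^M$ of projections in $A$ such that $r_m\sim_{\mathrm{MvN}}q_m$ for all $1\leq m\leq M$ and $r_{m_n}=p_n$ for all $1\leq n\leq N$.
   Context: For projections $p,q$ in a C$^*$-algebra $A$: $p\leq q$ means $pq=qp=p$; $p\sim_{\mathrm{MvN}}q$ denotes Murray--von Neumann equivalence; $p\lesssim q$ means that there is a projection $p'\in A$ with $p'\sim_{\mathrm{MvN}}p$ and $p'\leq q$. A sequence of projections is increasing if it is increasing for $\leq$. $A$ has cancellation if for all projections $p,q$ in $\bigcup_{n\geq1}M_n(A)$, $[p]_0=[q]_0$ in $K_0(A)$ if and only if $p\sim_{\mathrm{MvN}}q$. *)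

theory Defs
  imports "HOL-Analysis.Analysis" "HOL-Library.Product_Plus"
begin

text \<open>A C*-algebra is modelled as a real Banach algebra type 'a (no unit required)
  together with a complex scalar multiplication sc (compatible with scaleR) and an
  involution st satisfying the C*-identity.\<close>

locale cstar_algebra =
  fixes sc :: "complex \<Rightarrow> 'a::{real_normed_algebra, banach} \<Rightarrow> 'a"
    and st :: "'a \<Rightarrow> 'a"
  assumes sc_add_right: "\<And>c x y. sc c (x + y) = sc c x + sc c y"
    and sc_add_left: "\<And>c d x. sc (c + d) x = sc c x + sc d x"
    and sc_sc: "\<And>c d x. sc c (sc d x) = sc (c * d) x"
    and sc_one: "\<And>x. sc 1 x = x"
    and sc_real: "\<And>r x. sc (complex_of_real r) x = scaleR r x"
    and norm_sc: "\<And>c x. norm (sc c x) = cmod c * norm x"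
    and sc_mult_left: "\<And>c x y. sc c (x * y) = sc c x * y"
    and sc_mult_right: "\<And>c x y. sc c (x * y) = x * sc c y"
    and st_add: "\<And>x y. st (x + y) = st x + st y"
    and st_sc: "\<And>c x. st (sc c x) = sc (cnj c) (st x)"
    and st_mult: "\<And>x y. st (x * y) = st y * st x"
    and st_st: "\<And>x. st (st x) = x"
    and cstar_identity: "\<And>x. norm (st x * x) = (norm x)\<^sup>2"

definition is_proj :: "('a::real_normed_algebra \<Rightarrow> 'a) \<Rightarrow> 'a \<Rightarrow> bool" where
  "is_proj st p \<longleftrightarrow> p * p = p \<and> st p = p"

definition proj_le :: "'a::real_normed_algebra \<Rightarrow> 'a \<Rightarrow> bool" where
  "proj_le p q \<longleftrightarrow> p * q = p \<and> q * p = p"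

definition mvn :: "('a::real_normed_algebra \<Rightarrow> 'a) \<Rightarrow> 'a \<Rightarrow> 'a \<Rightarrow> bool" where
  "mvn st p q \<longleftrightarrow> (\<exists>v. st v * v = p \<and> v * st v = q)"

definition proj_lesssim :: "('a::real_normed_algebra \<Rightarrow> 'a) \<Rightarrow> 'a \<Rightarrow> 'a \<Rightarrow> bool" where
  "proj_lesssim st p q \<longleftrightarrow> (\<exists>p'. is_proj st p' \<and> mvn st p' p \<and> proj_le p' q)"

section \<open>Matrices: elements of M_infinity(B) as finitely supported nat x nat matrices\<close>

definition fin_mat :: "nat \<Rightarrow> (nat \<Rightarrow> nat \<Rightarrow> 'b::zero) \<Rightarrow> bool" where
  "fin_mat n X \<longleftrightarrow> (\<forall>i j. (n \<le> i \<or> n \<le> j) \<longrightarrow> X i j = 0)"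

definition mmul :: "('b \<Rightarrow> 'b \<Rightarrow> 'b) \<Rightarrow> nat \<Rightarrow> (nat \<Rightarrow> nat \<Rightarrow> 'b::comm_monoid_add)
    \<Rightarrow> (nat \<Rightarrow> nat \<Rightarrow> 'b) \<Rightarrow> (nat \<Rightarrow> nat \<Rightarrow> 'b)" where
  "mmul mul n X Y = (\<lambda>i j. \<Sum>k<n. mul (X i k) (Y k j))"

definition mstar :: "('b \<Rightarrow> 'b) \<Rightarrow> (nat \<Rightarrow> nat \<Rightarrow> 'b) \<Rightarrow> (nat \<Rightarrow> nat \<Rightarrow> 'b)" where
  "mstar s X = (\<lambda>i j. s (X j i))"

definition mat_proj :: "('b \<Rightarrow> 'b \<Rightarrow> 'b) \<Rightarrow> ('b \<Rightarrow> 'b) \<Rightarrow> nat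
    \<Rightarrow> (nat \<Rightarrow> nat \<Rightarrow> 'b::comm_monoid_add) \<Rightarrow> bool" where
  "mat_proj mul s n P \<longleftrightarrow> fin_mat n P \<and> mmul mul n P P = P \<and> mstar s P = P"

definition mat_mvn :: "('b \<Rightarrow> 'b \<Rightarrow> 'b) \<Rightarrow> ('b \<Rightarrow> 'b) \<Rightarrow> nat
    \<Rightarrow> (nat \<Rightarrow> nat \<Rightarrow> 'b::comm_monoid_add) \<Rightarrow> (nat \<Rightarrow> nat \<Rightarrow> 'b) \<Rightarrow> bool" where
  "mat_mvn mul s n P Q \<longleftrightarrow> (\<exists>V. fin_mat n V \<and> mmul mul n (mstar s V) V = P
                                   \<and> mmul mul n V (mstar s V) = Q)"

definition dsum :: "nat \<Rightarrow> (nat \<Rightarrow> nat \<Rightarrow> 'b::zero) \<Rightarrow> (nat \<Rightarrow> nat \<Rightarrow> 'b) \<Rightarrow> (nat \<Rightarrow> nat \<Rightarrow> 'b)" where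
  "dsum n P R = (\<lambda>i j. if i < n \<and> j < n then P i j
                       else if n \<le> i \<and> n \<le> j then R (i - n) (j - n) else 0)"

text \<open>The unitization of A: pairs (lambda, a) with
  (l,a)(m,b) = (l m, l b + m a + a b) and (l,a)* = (cnj l, a*).\<close>
definition umult :: "(complex \<Rightarrow> 'a \<Rightarrow> 'a) \<Rightarrow> complex \<times> 'a::real_normed_algebra
    \<Rightarrow> complex \<times> 'a \<Rightarrow> complex \<times> 'a" where
  "umult sc x y = (fst x * fst y, sc (fst x) (snd y) + sc (fst y) (snd x) + snd x * snd y)"

definition ustar :: "('a \<Rightarrow> 'a) \<Rightarrow> complex \<times> 'a \<Rightarrow> complex \<times> 'a" where
  "ustar st x = (cnj (fst x), st (snd x))"

definition uemb :: "(nat \<Rightarrow> nat \<Rightarrow> 'a) \<Rightarrow> (nat \<Rightarrow> nat \<Rightarrow> complex \<times> 'a)" where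
  "uemb P = (\<lambda>i j. (0, P i j))"

text \<open>Equality of K_0 classes [P]_0 = [Q]_0 for projections P, Q in M_infinity(A):
  K_0(A) sits injectively in K_0 of the unitization, which is the Grothendieck group of
  the semigroup of MvN classes of projections of M_infinity(unitization); equality of
  Grothendieck classes means P + R ~ Q + R (direct sum) for some projection R.\<close>
definition k0_eq :: "(complex \<Rightarrow> 'a \<Rightarrow> 'a) \<Rightarrow> ('a \<Rightarrow> 'a) \<Rightarrow>
    (nat \<Rightarrow> nat \<Rightarrow> 'a::real_normed_algebra) \<Rightarrow> (nat \<Rightarrow> nat \<Rightarrow> 'a) \<Rightarrow> bool" where
  "k0_eq sc st P Q \<longleftrightarrow> (\<exists>n k R. fin_mat n P \<and> fin_mat n Q
       \<and> mat_proj (umult sc) (ustar st) k R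
       \<and> mat_mvn (umult sc) (ustar st) (n + k) (dsum n (uemb P) R) (dsum n (uemb Q) R))"

definition has_cancellation :: "(complex \<Rightarrow> 'a::real_normed_algebra \<Rightarrow> 'a) \<Rightarrow> ('a \<Rightarrow> 'a) \<Rightarrow> bool" where
  "has_cancellation sc st \<longleftrightarrow>
     (\<forall>n P Q. mat_proj (*) st n P \<and> mat_proj (*) st n Q \<longrightarrow>
        (k0_eq sc st P Q \<longleftrightarrow> mat_mvn (*) st n P Q))"

definition incr_seq :: "('a::real_normed_algebra \<Rightarrow> 'a) \<Rightarrow> nat \<Rightarrow> (nat \<Rightarrow> 'a) \<Rightarrow> bool" where
  "incr_seq st N p \<longleftrightarrow> (\<forall>n\<in>{1..N}. is_proj st (p n))
                        \<and> (\<forall>n. 1 \<le> n \<and> n < N \<longrightarrow> proj_le (p n) (p (Suc n)))"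

end

theory Submission
  imports Defs
begin

text \<open>
  (1) Replacing q by an equivalent subprojection q2 of p2, and p1 by an equivalent subprojection
  d of q2, we may assume p1 \<sim> d \<le> q \<le> p2. Cancellation applied to
  p2 = (p2 - p1) + p1 = (p2 - d) + d gives a partial isometry from p2 - p1 onto p2 - d; it carries
  q - d back to a projection e \<le> p2 - p1, and then q' = p1 + e \<sim> d + (q - d) = q.
  Cancellation is reached through K_0: if a + b = c + d orthogonally and b \<sim> d, then
  diag(a, b) \<sim> diag(c, b) in M_2(A), so [a]_0 = [c]_0.

  (2) The r_k are built one at a time: r_k = p_n when k = m_n, and otherwise, for the least n
  with k < m_n, part (1) places a copy of q_k between r_(k-1) and p_n, which is possible because
  r_(k-1) \<sim> q_(k-1) \<le> q_k \<le> q_(m_n) \<sim> p_n.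
\<close>

section \<open>Projections and Murray--von Neumann equivalence\<close>

lemma proj_le_trans: "proj_le a b \<Longrightarrow> proj_le b c \<Longrightarrow> proj_le a c"
  unfolding proj_le_def by (metis mult.assoc)

lemma proj_le_zero [simp]: "proj_le 0 a"
  unfolding proj_le_def by simp

lemma proj_le_add: "proj_le a c \<Longrightarrow> proj_le b c \<Longrightarrow> proj_le (a + b) c"
  unfolding proj_le_def by (simp add: algebra_simps)

context cstar_algebra
begin

lemma st_zero [simp]: "st 0 = 0"
  using st_add[of 0 0] by simp

lemma st_diff: "st (x - y) = st x - st y"
  using st_add[of "x - y" y] by (simp add: eq_diff_eq)

lemma sc_zero [simp]: "sc 0 x = 0"
  using sc_real[of 0 x] by simp

lemma is_proj_zero [simp]: "is_proj st 0"
  by (simp add: is_proj_def)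

lemma st_mult_self_eq_zero: "st x * x = 0 \<Longrightarrow> x = 0"
  using cstar_identity[of x] by simp

lemma partial_isometry_right:
  assumes "st v * v = p" "p * p = p"
  shows "v * p = v"
proof -
  have "st p = p"
    using assms(1) st_mult[of "st v" v] st_st by simp
  then have "st (v - v * p) * (v - v * p) = st v * v - st v * v * p - p * (st v * v) + p * (st v * v) * p"
    by (simp add: st_diff st_mult algebra_simps)
  also have "\<dots> = 0"
    using assms by (simp add: mult.assoc)
  finally have "v - v * p = 0"
    by (rule st_mult_self_eq_zero)
  then show ?thesis
    by simp
qed

lemma partial_isometry_left:
  assumes "v * st v = q" "q * q = q"
  shows "q * v = v"
proof -
  have "st q = q"
    using assms(1) st_mult[of v "st v"] st_st by simp
  then have "q * v = st (st v * q)"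
    by (simp add: st_mult st_st)
  also have "\<dots> = v"
    using partial_isometry_right[of "st v" q] assms st_st by simp
  finally show ?thesis .
qed

lemma mvn_sym: "mvn st a b \<Longrightarrow> mvn st b a"
  unfolding mvn_def by (metis st_st)

lemma mvn_trans:
  assumes "is_proj st b" "mvn st a b" "mvn st b c"
  shows "mvn st a c"
proof -
  obtain v u where v: "st v * v = a" "v * st v = b" and u: "st u * u = b" "u * st u = c"
    using assms(2,3) unfolding mvn_def by blast
  have "b * v = v" "u * b = u"
    using partial_isometry_left[OF v(2)] partial_isometry_right[OF u(1)] assms(1)
    by (auto simp: is_proj_def)
  have "st (u * v) * (u * v) = st v * (st u * u) * v"
    by (simp add: st_mult mult.assoc)
  also have "\<dots> = a"
    using u(1) v(1) \<open>b * v = v\<close> by (simp add: mult.assoc)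
  finally have left: "st (u * v) * (u * v) = a" .
  have "u * v * st (u * v) = u * (v * st v) * st u"
    by (simp add: st_mult mult.assoc)
  also have "\<dots> = c"
    using v(2) u(2) \<open>u * b = u\<close> by simp
  finally show ?thesis
    using left unfolding mvn_def by (intro exI[of _ "u * v"] conjI)
qed

lemma proj_lesssim_zero [simp]: "proj_lesssim st 0 q"
proof -
  have "mvn st 0 0"
    unfolding mvn_def by (intro exI[of _ 0]) simp
  then show ?thesis
    unfolding proj_lesssim_def by (intro exI[of _ 0]) simp
qed

lemma proj_lesssim_if_le_mvn:
  assumes a: "is_proj st a" and le: "proj_le a q" and pq: "mvn st p q" and p: "is_proj st p"
  shows "proj_lesssim st a p"
proof -
  obtain v where v: "st v * v = p" "v * st v = q"
    using pq unfolding mvn_def by blast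
  have A: "a * a = a" "st a = a" "a * q = a" "q * a = a"
    using a le by (auto simp: is_proj_def proj_le_def)
  have vp: "v * p = v"
    using partial_isometry_right[OF v(1)] p by (simp add: is_proj_def)
  have pv: "p * st v = st v"
    using arg_cong[OF vp, of st] p by (simp add: is_proj_def st_mult)
  define a' where "a' = st v * a * v"
  have "a' * a' = st v * (a * (v * st v) * a) * v"
    by (simp add: a'_def mult.assoc)
  also have "\<dots> = a'"
    using A v(2) by (simp add: a'_def)
  finally have proj: "is_proj st a'"
    using A by (simp add: is_proj_def a'_def st_mult st_st mult.assoc)
  have "st (a * v) * (a * v) = st v * (a * a) * v" "a * v * st (a * v) = a * (v * st v) * a"
    using A(2) by (simp_all add: st_mult mult.assoc)
  then have equiv: "mvn st a' a"
    unfolding mvn_def a'_def using A v(2) by (intro exI[of _ "a * v"]) simp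
  have "a' * p = a'" "p * a' = a'"
    by (simp add: a'_def mult.assoc vp) (simp add: a'_def pv flip: mult.assoc)
  then show ?thesis
    using proj equiv unfolding proj_lesssim_def proj_le_def by blast
qed

lemma proj_mult_zero_commute: "is_proj st a \<Longrightarrow> is_proj st b \<Longrightarrow> a * b = 0 \<Longrightarrow> b * a = 0"
  unfolding is_proj_def by (metis st_mult st_zero)

lemma is_proj_add:
  assumes "is_proj st a" "is_proj st b" "a * b = 0"
  shows "is_proj st (a + b)"
  using assms proj_mult_zero_commute[OF assms] by (simp add: is_proj_def algebra_simps st_add)

lemma is_proj_diff:
  assumes "is_proj st p" "is_proj st r" "proj_le p r"
  shows "is_proj st (r - p)"
  using assms by (simp add: is_proj_def proj_le_def algebra_simps st_diff)

lemma proj_le_add_self: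
  assumes "is_proj st p" "is_proj st e" "p * e = 0"
  shows "proj_le p (p + e)"
  using assms proj_mult_zero_commute[OF assms] by (simp add: is_proj_def proj_le_def algebra_simps)

lemma proj_le_diff_self:
  assumes "is_proj st r" "proj_le p r"
  shows "proj_le (r - p) r"
  using assms by (simp add: is_proj_def proj_le_def algebra_simps)

lemma proj_le_diff_diff:
  assumes "is_proj st d" "proj_le d q" "proj_le q r"
  shows "proj_le (q - d) (r - d)"
proof -
  have "proj_le d r"
    using assms(2,3) by (rule proj_le_trans)
  then show ?thesis
    using assms by (simp add: is_proj_def proj_le_def algebra_simps)
qed

lemma mult_eq_zero_if_proj_le_diff:
  assumes "is_proj st p" "proj_le p r" "proj_le e (r - p)"
  shows "p * e = 0"
proof -
  have "p * e = p * (r - p) * e"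
    using assms(3) by (simp add: proj_le_def mult.assoc)
  also have "\<dots> = 0"
    using assms(1,2) by (simp add: is_proj_def proj_le_def algebra_simps)
  finally show ?thesis .
qed

lemma mvn_add_orthogonal:
  assumes "is_proj st a" "is_proj st b" "is_proj st c" "is_proj st d"
    and "a * b = 0" "c * d = 0" "mvn st a c" "mvn st b d"
  shows "mvn st (a + b) (c + d)"
proof -
  obtain v u where v: "st v * v = a" "v * st v = c" and u: "st u * u = b" "u * st u = d"
    using assms(7,8) unfolding mvn_def by blast
  have "v * a = v" "c * v = v" "u * b = u" "d * u = u"
    using partial_isometry_right[OF v(1)] partial_isometry_left[OF v(2)]
      partial_isometry_right[OF u(1)] partial_isometry_left[OF u(2)] assms(1-4)
    by (auto simp: is_proj_def)
  moreover have "st v * c = st v" "b * st u = st u"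
    using arg_cong[OF \<open>c * v = v\<close>, of st] arg_cong[OF \<open>u * b = u\<close>, of st] assms(2,3)
    by (simp_all add: is_proj_def st_mult)
  ultimately have "st v * u = st v * (c * d) * u" "v * st u = v * (a * b) * st u"
    by (metis mult.assoc)+
  then have vu: "st v * u = 0" and uv: "v * st u = 0"
    using assms(5,6) by simp_all
  have "st u * v = 0" "u * st v = 0"
    using arg_cong[OF vu, of st] arg_cong[OF uv, of st] by (simp_all add: st_mult st_st)
  then show ?thesis
    unfolding mvn_def using v u vu uv
    by (intro exI[of _ "v + u"]) (simp add: st_add algebra_simps)
qed

end

section \<open>Cancellation of orthogonal summands\<close>

definition corner :: "'b::zero \<Rightarrow> nat \<Rightarrow> nat \<Rightarrow> 'b" where
  "corner x = (\<lambda>i j. if i = 0 \<and> j = 0 then x else 0)"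

definition vec2 :: "'b::zero \<Rightarrow> 'b \<Rightarrow> nat \<Rightarrow> 'b" where
  "vec2 a b = (\<lambda>i. if i = 0 then a else if i = 1 then b else 0)"

lemma dsum_corner: "dsum 1 (corner a) (corner b) = (\<lambda>i j. if i = j then vec2 a b i else 0)"
  by (auto simp: dsum_def corner_def vec2_def fun_eq_iff)

lemma mvn_if_mat_mvn_corner:
  assumes "mat_mvn (*) st 1 (corner a) (corner c)"
  shows "mvn st a c"
proof -
  obtain U where "mmul (*) 1 (mstar st U) U = corner a" "mmul (*) 1 U (mstar st U) = corner c"
    using assms unfolding mat_mvn_def by blast
  then have "st (U 0 0) * U 0 0 = a" "U 0 0 * st (U 0 0) = c"
    by (auto simp: mmul_def mstar_def corner_def fun_eq_iff)
  then show ?thesis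
    unfolding mvn_def by blast
qed

context cstar_algebra
begin

lemma umult_uemb [simp]: "umult sc (0, x) (0, y) = (0, x * y)"
  by (simp add: umult_def)

lemma mmul_uemb: "mmul (umult sc) n (uemb X) (uemb Y) = uemb (mmul (*) n X Y)"
  by (simp add: mmul_def uemb_def sum_prod)

lemma mstar_uemb: "mstar (ustar st) (uemb X) = uemb (mstar st X)"
  by (simp add: mstar_def uemb_def ustar_def)

lemma fin_mat_uemb: "fin_mat n (uemb X) = fin_mat n X"
  by (simp add: fin_mat_def uemb_def zero_prod_def)

lemma dsum_uemb: "dsum n (uemb X) (uemb Y) = uemb (dsum n X Y)"
  by (simp add: dsum_def uemb_def zero_prod_def fun_eq_iff)

lemma k0_eq_if_mat_mvn_dsum:
  assumes "fin_mat n P" "fin_mat n Q" "mat_proj (*) st k R"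
    and "mat_mvn (*) st (n + k) (dsum n P R) (dsum n Q R)"
  shows "k0_eq sc st P Q"
proof -
  have "mat_proj (umult sc) (ustar st) k (uemb R)"
    using assms(3) by (simp add: mat_proj_def mmul_uemb mstar_uemb fin_mat_uemb)
  moreover have "mat_mvn (umult sc) (ustar st) (n + k) (dsum n (uemb P) (uemb R)) (dsum n (uemb Q) (uemb R))"
    using assms(4) unfolding mat_mvn_def dsum_uemb
    by (metis fin_mat_uemb mmul_uemb mstar_uemb)
  ultimately show ?thesis
    unfolding k0_eq_def using assms(1,2) by blast
qed

lemma mat_proj_corner: "is_proj st x \<Longrightarrow> mat_proj (*) st 1 (corner x)"
  by (simp add: mat_proj_def is_proj_def fin_mat_def mmul_def mstar_def corner_def fun_eq_iff)

lemma mmul_mstar_outer: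
  "mmul (*) n (mstar st (\<lambda>i j. x i * y j)) (\<lambda>i j. x i * y j)
     = (\<lambda>i j. st (y i) * (\<Sum>k<n. st (x k) * x k) * y j)"
  by (simp add: mmul_def mstar_def st_mult sum_distrib_left sum_distrib_right mult.assoc)

lemma mmul_outer_mstar:
  "mmul (*) n (\<lambda>i j. x i * y j) (mstar st (\<lambda>i j. x i * y j))
     = (\<lambda>i j. x i * (\<Sum>k<n. y k * st (y k)) * st (x j))"
  by (simp add: mmul_def mstar_def st_mult sum_distrib_left sum_distrib_right mult.assoc)

lemma mat_mvn_dsum_corner:
  assumes "is_proj st a" "is_proj st b" "is_proj st c" "is_proj st d"
    and "a * b = 0" "c * d = 0" "a + b = c + d" "mvn st d b"
  shows "mat_mvn (*) st 2 (dsum 1 (corner a) (corner b)) (dsum 1 (corner c) (corner b))"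
proof -
  obtain w where w: "st w * w = d" "w * st w = b"
    using assms(8) unfolding mvn_def by blast
  have P: "a * a = a" "st a = a" "b * b = b" "st b = b" "c * c = c" "st c = c" "d * d = d" "st d = d"
    using assms(1-4) by (auto simp: is_proj_def)
  have orth: "b * a = 0" "d * c = 0"
    using proj_mult_zero_commute assms(1-6) by auto
  have "w * d = w"
    using partial_isometry_right[OF w(1)] P by simp
  then have "d * st w = st w"
    using arg_cong[of _ _ st] P by (metis st_mult)
  have "w * c = 0" "c * st w = 0"
    using \<open>w * d = w\<close> \<open>d * st w = st w\<close> orth(2) assms(6)
    by (metis mult.assoc mult_zero_left mult_zero_right)+
  define x y where "x = vec2 c w" and "y = vec2 a b"
  define V where "V = (\<lambda>i j. x i * y j)"
  have "(\<Sum>k<2. st (x k) * x k) = a + b"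
    using P w(1) assms(7) by (simp add: x_def vec2_def numeral_2_eq_2)
  moreover have "st (y i) * (a + b) * y j = (if i = j then vec2 a b i else 0)" for i j
    using P orth assms(5) by (simp add: y_def vec2_def algebra_simps)
  ultimately have left: "mmul (*) 2 (mstar st V) V = dsum 1 (corner a) (corner b)"
    unfolding V_def mmul_mstar_outer dsum_corner by simp
  have "(\<Sum>k<2. y k * st (y k)) = c + d"
    using P assms(7) by (simp add: y_def vec2_def numeral_2_eq_2)
  moreover have "x i * (c + d) * st (x j) = (if i = j then vec2 c b i else 0)" for i j
    using P orth assms(6) w(2) \<open>w * c = 0\<close> \<open>c * st w = 0\<close> \<open>d * st w = st w\<close>
    by (simp add: x_def vec2_def algebra_simps)
  ultimately have right: "mmul (*) 2 V (mstar st V) = dsum 1 (corner c) (corner b)"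
    unfolding V_def mmul_outer_mstar dsum_corner by simp
  have "fin_mat 2 V"
    by (simp add: fin_mat_def V_def x_def y_def vec2_def)
  with left right show ?thesis
    unfolding mat_mvn_def by blast
qed

lemma mvn_cancel_orthogonal:
  assumes "has_cancellation sc st"
    and "is_proj st a" "is_proj st b" "is_proj st c" "is_proj st d"
    and "a * b = 0" "c * d = 0" "a + b = c + d" "mvn st b d"
  shows "mvn st a c"
proof -
  have "mat_mvn (*) st (1 + 1) (dsum 1 (corner a) (corner b)) (dsum 1 (corner c) (corner b))"
    using mat_mvn_dsum_corner[OF assms(2-8) mvn_sym[OF assms(9)]] by (simp only: one_add_one)
  then have "k0_eq sc st (corner a) (corner c)"
    using mat_proj_corner[OF assms(3)] by (intro k0_eq_if_mat_mvn_dsum) (auto simp: fin_mat_def corner_def)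
  then have "mat_mvn (*) st 1 (corner a) (corner c)"
    using assms(1) mat_proj_corner[OF assms(2)] mat_proj_corner[OF assms(4)]
    unfolding has_cancellation_def by simp
  then show ?thesis
    by (rule mvn_if_mat_mvn_corner)
qed

section \<open>A projection between two comparable projections\<close>

lemma exists_proj_between_le:
  assumes canc: "has_cancellation sc st"
    and p1: "is_proj st p1" and p2: "is_proj st p2" and q: "is_proj st q" and d: "is_proj st d"
    and "proj_le p1 p2" "proj_le d q" "proj_le q p2" "mvn st p1 d"
  shows "\<exists>q'. is_proj st q' \<and> mvn st q' q \<and> proj_le p1 q' \<and> proj_le q' p2"
proof -
  have "proj_le d p2"
    using assms(7,8) by (rule proj_le_trans)
  have "mvn st (p2 - p1) (p2 - d)"
  proof (rule mvn_cancel_orthogonal[OF canc _ p1 _ d])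
    show "is_proj st (p2 - p1)" "is_proj st (p2 - d)"
      using is_proj_diff p1 p2 d assms(6) \<open>proj_le d p2\<close> by auto
    show "(p2 - p1) * p1 = 0" "(p2 - d) * d = 0"
      using p1 d assms(6) \<open>proj_le d p2\<close> by (simp_all add: is_proj_def proj_le_def algebra_simps)
  qed (use assms(9) in simp_all)
  moreover have "proj_le (q - d) (p2 - d)"
    using d assms(7,8) by (rule proj_le_diff_diff)
  ultimately have "proj_lesssim st (q - d) (p2 - p1)"
    using is_proj_diff p1 p2 q d assms(6,7) by (intro proj_lesssim_if_le_mvn) auto
  then obtain e where e: "is_proj st e" "mvn st e (q - d)" "proj_le e (p2 - p1)"
    unfolding proj_lesssim_def by blast
  have "p1 * e = 0"
    using p1 assms(6) e(3) by (rule mult_eq_zero_if_proj_le_diff)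
  have "d * (q - d) = 0"
    using d assms(7) by (simp add: is_proj_def proj_le_def algebra_simps)
  have "mvn st (p1 + e) (d + (q - d))"
    using e \<open>p1 * e = 0\<close> \<open>d * (q - d) = 0\<close> p1 d q assms(7,9) is_proj_diff
    by (intro mvn_add_orthogonal) auto
  moreover have "proj_le e p2"
    using e(3) proj_le_diff_self[OF p2 assms(6)] by (rule proj_le_trans)
  ultimately show ?thesis
    using is_proj_add[OF p1 e(1) \<open>p1 * e = 0\<close>] proj_le_add_self[OF p1 e(1) \<open>p1 * e = 0\<close>]
      proj_le_add[OF assms(6)]
    by (intro exI[of _ "p1 + e"]) simp
qed

lemma exists_proj_between:
  assumes canc: "has_cancellation sc st"
    and p1: "is_proj st p1" and q: "is_proj st q" and p2: "is_proj st p2"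
    and "proj_le p1 p2" "proj_lesssim st p1 q" "proj_lesssim st q p2"
  shows "\<exists>q'. is_proj st q' \<and> mvn st q' q \<and> proj_le p1 q' \<and> proj_le q' p2"
proof -
  obtain q2 where q2: "is_proj st q2" "mvn st q2 q" "proj_le q2 p2"
    using assms(7) unfolding proj_lesssim_def by blast
  obtain p1' where p1': "is_proj st p1'" "mvn st p1' p1" "proj_le p1' q"
    using assms(6) unfolding proj_lesssim_def by blast
  have "proj_lesssim st p1' q2"
    using p1'(1,3) q2(2,1) by (rule proj_lesssim_if_le_mvn)
  then obtain d where d: "is_proj st d" "mvn st d p1'" "proj_le d q2"
    unfolding proj_lesssim_def by blast
  have "mvn st p1 d"
    using p1'(1) mvn_sym[OF p1'(2)] mvn_sym[OF d(2)] by (rule mvn_trans)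
  then obtain q' where "is_proj st q'" "mvn st q' q2" "proj_le p1 q'" "proj_le q' p2"
    using exists_proj_between_le[OF canc p1 p2 q2(1) d(1) assms(5) d(3) q2(3)] by blast
  then show ?thesis
    using mvn_trans[OF q2(1) _ q2(2)] by blast
qed

end

section \<open>Interpolating chains\<close>

lemma strict_mono_on_atLeastAtMost_if_Suc:
  fixes f :: "nat \<Rightarrow> 'a::order"
  assumes "\<And>n. a \<le> n \<Longrightarrow> n < b \<Longrightarrow> f n < f (Suc n)"
  shows "strict_mono_on {a..b} f"
proof (rule strict_mono_onI)
  fix x y
  assume x: "x \<in> {a..b}" and y: "y \<in> {a..b}" and "x < y"
  then have "Suc x \<le> y"
    by simp
  then show "f x < f y"
    using y
  proof (induction y rule: dec_induct)
    case base
    then show ?case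
      using assms x by simp
  next
    case (step n)
    have "f x < f n"
      using step x by simp
    also have "f n < f (Suc n)"
      using assms step x by simp
    finally show ?case .
  qed
qed

lemma incr_seq_le:
  assumes "incr_seq st N p" "1 \<le> i" "i \<le> j" "j \<le> N"
  shows "proj_le (p i) (p j)"
  using assms(3,4)
proof (induction j rule: dec_induct)
  case base
  then show ?case
    using assms(1,2) by (simp add: incr_seq_def is_proj_def proj_le_def)
next
  case (step j)
  then show ?case
    using assms(1,2) by (auto simp: incr_seq_def intro: proj_le_trans)
qed

text \<open>Index 0 carries the dummy projection r 0 = 0; the sequences of the statement start at 1.\<close>

definition interpolating_chain ::
    "('a::real_normed_algebra \<Rightarrow> 'a) \<Rightarrow> nat \<Rightarrow> (nat \<Rightarrow> 'a) \<Rightarrow> (nat \<Rightarrow> 'a) \<Rightarrow> (nat \<Rightarrow> nat)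
      \<Rightarrow> nat \<Rightarrow> (nat \<Rightarrow> 'a) \<Rightarrow> bool" where
  "interpolating_chain st N p q m k r \<longleftrightarrow> r 0 = 0
     \<and> (\<forall>i\<le>k. is_proj st (r i) \<and> (\<forall>n\<in>{1..N}. i \<le> m n \<longrightarrow> proj_le (r i) (p n))
               \<and> (\<forall>n\<in>{1..N}. m n = i \<longrightarrow> r i = p n))
     \<and> (\<forall>i<k. proj_le (r i) (r (Suc i))) \<and> (\<forall>i\<in>{1..k}. mvn st (r i) (q i))"

context cstar_algebra
begin

lemma exists_next_proj:
  assumes canc: "has_cancellation sc st"
    and p: "incr_seq st N p" and q: "incr_seq st M q"
    and m: "strict_mono_on {1..N} m" "m ` {1..N} \<subseteq> {1..M}" "1 \<le> N" "m N = M"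
    and pq: "\<forall>n\<in>{1..N}. mvn st (p n) (q (m n))"
    and k: "k \<in> {1..M}"
    and a: "is_proj st a" "proj_lesssim st a (q k)" "\<forall>n\<in>{1..N}. k \<le> m n \<longrightarrow> proj_le a (p n)"
  shows "\<exists>x. is_proj st x \<and> proj_le a x \<and> mvn st x (q k)
           \<and> (\<forall>n\<in>{1..N}. k \<le> m n \<longrightarrow> proj_le x (p n)) \<and> (\<forall>n\<in>{1..N}. m n = k \<longrightarrow> x = p n)"
proof -
  define n0 where "n0 = (LEAST n. n \<in> {1..N} \<and> k \<le> m n)"
  have "N \<in> {1..N} \<and> k \<le> m N"
    using m(3,4) k by auto
  then have n0: "n0 \<in> {1..N}" "k \<le> m n0"
    unfolding n0_def by (metis (mono_tags, lifting) LeastI)+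
  have least: "n0 \<le> n" if "n \<in> {1..N}" "k \<le> m n" for n
    unfolding n0_def using that by (simp add: Least_le)
  have above: "proj_le (p n0) (p n)" if "n \<in> {1..N}" "k \<le> m n" for n
    using least[OF that] that n0 by (intro incr_seq_le[OF p]) auto
  have pn0: "is_proj st (p n0)"
    using p n0(1) by (simp add: incr_seq_def)
  show ?thesis
  proof (cases "m n0 = k")
    case True
    show ?thesis
    proof (intro exI[of _ "p n0"] conjI ballI impI)
      show "is_proj st (p n0)" "proj_le a (p n0)" "mvn st (p n0) (q k)"
        using pn0 a(3) n0 pq True by auto
      show "proj_le (p n0) (p n)" if "n \<in> {1..N}" "k \<le> m n" for n
        using that by (rule above)
      show "p n0 = p n" if "n \<in> {1..N}" "m n = k" for n
        using strict_mono_on_eqD[OF m(1), of n0 n] that n0(1) True by simp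
    qed
  next
    case False
    have "m n0 \<in> {1..M}"
      using m(2) n0(1) by blast
    then have "proj_le (q k) (q (m n0))"
      using k n0(2) by (intro incr_seq_le[OF q]) auto
    then have "proj_lesssim st (q k) (p n0)"
      using q k pq n0(1) pn0 by (intro proj_lesssim_if_le_mvn) (auto simp: incr_seq_def)
    then obtain x where x: "is_proj st x" "mvn st x (q k)" "proj_le a x" "proj_le x (p n0)"
      using exists_proj_between[OF canc a(1) _ pn0 _ a(2)] q k a(3) n0 by (auto simp: incr_seq_def)
    moreover have "m n \<noteq> k" if "n \<in> {1..N}" for n
    proof
      assume "m n = k"
      then have "m n0 \<le> k"
        using strict_mono_on_leD[OF m(1) n0(1) that] least[OF that] by simp
      then show False
        using False n0(2) by simp
    qed
    ultimately show ?thesis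
      using above by (intro exI[of _ x]) (auto intro: proj_le_trans)
  qed
qed

lemma exists_interpolating_chain:
  assumes canc: "has_cancellation sc st"
    and p: "incr_seq st N p" and q: "incr_seq st M q"
    and m: "strict_mono_on {1..N} m" "m ` {1..N} \<subseteq> {1..M}" "1 \<le> N" "m N = M"
    and pq: "\<forall>n\<in>{1..N}. mvn st (p n) (q (m n))"
    and "k \<le> M"
  shows "\<exists>r. interpolating_chain st N p q m k r"
  using \<open>k \<le> M\<close>
proof (induction k)
  case 0
  have "\<forall>n\<in>{1..N}. m n \<noteq> 0"
    using m(2) by force
  then show ?case
    unfolding interpolating_chain_def by (intro exI[of _ "\<lambda>_. 0"]) fastforce
next
  case (Suc k)
  then obtain r where r: "interpolating_chain st N p q m k r"
    by auto
  have "proj_lesssim st (r k) (q (Suc k))"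
  proof (cases "k = 0")
    case False
    then have "is_proj st (q k)" "mvn st (q k) (r k)" "proj_le (q k) (q (Suc k))"
      using r q Suc.prems mvn_sym by (auto simp: interpolating_chain_def incr_seq_def)
    then show ?thesis
      unfolding proj_lesssim_def by blast
  qed (use r in \<open>simp add: interpolating_chain_def\<close>)
  then obtain x where "is_proj st x" "proj_le (r k) x" "mvn st x (q (Suc k))"
      "\<forall>n\<in>{1..N}. Suc k \<le> m n \<longrightarrow> proj_le x (p n)" "\<forall>n\<in>{1..N}. m n = Suc k \<longrightarrow> x = p n"
    using exists_next_proj[OF canc p q m pq, of "Suc k" "r k"] r Suc.prems
    by (auto simp: interpolating_chain_def)
  then have "interpolating_chain st N p q m (Suc k) (r(Suc k := x))"
    using r by (auto simp: interpolating_chain_def le_Suc_eq less_Suc_eq)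
  then show ?case
    by blast
qed

lemma exists_increasing_interpolation:
  assumes canc: "has_cancellation sc st"
    and p: "incr_seq st N p" and q: "incr_seq st M q" and "1 \<le> N"
    and "1 \<le> m 1" and "\<forall>n. 1 \<le> n \<and> n < N \<longrightarrow> m n < m (Suc n)" and "m N = M"
    and pq: "\<forall>n\<in>{1..N}. mvn st (p n) (q (m n))"
  shows "\<exists>r. incr_seq st M r \<and> (\<forall>k\<in>{1..M}. mvn st (r k) (q k)) \<and> (\<forall>n\<in>{1..N}. r (m n) = p n)"
proof -
  have mono: "strict_mono_on {1..N} m"
    using assms(6) by (intro strict_mono_on_atLeastAtMost_if_Suc) auto
  have range: "m ` {1..N} \<subseteq> {1..M}"
    using strict_mono_on_leD[OF mono] assms(4,5,7) by fastforce
  obtain r where "interpolating_chain st N p q m M r"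
    using exists_interpolating_chain[OF canc p q mono range assms(4,7) pq] by blast
  then show ?thesis
    using range by (intro exI[of _ r]) (auto simp: interpolating_chain_def incr_seq_def)
qed

end

theorem lemma2p2:
  fixes sc :: "complex \<Rightarrow> 'a::{real_normed_algebra, banach} \<Rightarrow> 'a"
    and st :: "'a \<Rightarrow> 'a"
  assumes "cstar_algebra sc st"
    and "has_cancellation sc st"
  shows "(\<forall>p1 q p2. is_proj st p1 \<and> is_proj st q \<and> is_proj st p2 \<and> proj_le p1 p2
            \<and> proj_lesssim st p1 q \<and> proj_lesssim st q p2
            \<longrightarrow> (\<exists>q'. is_proj st q' \<and> mvn st q' q \<and> proj_le p1 q' \<and> proj_le q' p2))
       \<and> (\<forall>(N::nat) (M::nat) p q (m::nat \<Rightarrow> nat).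
            incr_seq st N p \<and> incr_seq st M q \<and> 1 \<le> N
            \<and> 1 \<le> m 1 \<and> (\<forall>n. 1 \<le> n \<and> n < N \<longrightarrow> m n < m (Suc n)) \<and> m N = M
            \<and> (\<forall>n\<in>{1..N}. mvn st (p n) (q (m n)))
            \<longrightarrow> (\<exists>r. incr_seq st M r \<and> (\<forall>k\<in>{1..M}. mvn st (r k) (q k))
                     \<and> (\<forall>n\<in>{1..N}. r (m n) = p n)))"
  using cstar_algebra.exists_proj_between[OF assms]
    cstar_algebra.exists_increasing_interpolation[OF assms]
  by blast

end
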